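(* Let $p$ be a prime number and $n\in\mathbb{N}$, $n\ge 1$. Then there exists a bijection between the set $W_p^n$ and the orbit set $(\mathbb{Z}_p\times\mathbb{Z}_p)^n/\mathrm{SL}(2,\mathbb{Z})$.
   Context: Consider the alphabet of $p^2$ letters $\{0,1,\dots,p^2-1\}$. $W_p^n$ is the set of words $a_1a_2\dots a_n$ of length $n$ over this alphabet consisting of the all-zero word $00\dots0$ together with all words for which there exist integers $j,k$ with $1\le j<k\le n+1$ such that: (R1) $a_i=0$ for $i<j$; (R2) $a_j=1$; (R3) $a_i\in\{0,1,\dots,p-1\}$ for $j<i<k$; (R4) if $k\le n$ then $a_k\in\{p,2p,\dots,(p-1)p\}$; (R5) if $k<n$ then $a_i\in\{0,1,\dots,p^2-1\}$ for $i>k$. The group $\mathrm{SL}(2,\mathbb{Z})$ acts on the left on $(\mathbb{Z}_p\times\mathbb{Z}_p)^n$, whose elements are viewed as $2\times n$ matrices $\binom{u}{v}$ with rows $u,v\in\mathbb{Z}_p^n$, by matrix multiplication with entries reduced modulo $p$; $(\mathbb{Z}_p\times\mathbb{Z}_p)^n/\mathrm{SL}(2,\mathbb{Z})$ denotes the set of orbits of this action. *)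

theory Defs
  imports "HOL-Computational_Algebra.Primes"
begin

text \<open>Words of length n over the alphabet {0,...,p^2-1}, as lists; the letter a_i
  (1-based, as in the paper) is w ! (i - 1).\<close>

definition W :: "nat \<Rightarrow> nat \<Rightarrow> nat list set" where
  "W p n = {w. length w = n \<and> (\<forall>i<n. w ! i < p^2) \<and>
     (w = replicate n 0 \<or>
      (\<exists>j k. 1 \<le> j \<and> j < k \<and> k \<le> n + 1 \<and>
        (\<forall>i. 1 \<le> i \<and> i < j \<longrightarrow> w ! (i - 1) = 0) \<and>
        w ! (j - 1) = 1 \<and>
        (\<forall>i. j < i \<and> i < k \<longrightarrow> w ! (i - 1) \<in> {0..<p}) \<and>
        (k \<le> n \<longrightarrow> w ! (k - 1) \<in> {p * t | t. 1 \<le> t \<and> t \<le> p - 1}) \<and>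
        (k < n \<longrightarrow> (\<forall>i. k < i \<and> i \<le> n \<longrightarrow> w ! (i - 1) \<in> {0..<p^2}))))}"

text \<open>(Z_p x Z_p)^n as pairs (u, v) of rows u, v in Z_p^n, with Z_p represented by {0..p-1}
  and rows as integer lists of length n.\<close>

definition pairs :: "nat \<Rightarrow> nat \<Rightarrow> (int list \<times> int list) set" where
  "pairs p n = {(u, v). length u = n \<and> length v = n \<and>
      set u \<subseteq> {0..<int p} \<and> set v \<subseteq> {0..<int p}}"

text \<open>SL(2,Z): the matrix (a b; c d) is encoded as (a, b, c, d).\<close>

definition SL2Z :: "(int \<times> int \<times> int \<times> int) set" where
  "SL2Z = {(a, b, c, d). a * d - b * c = 1}"

fun act :: "nat \<Rightarrow> int \<times> int \<times> int \<times> int \<Rightarrow> int list \<times> int list \<Rightarrow> int list \<times> int list" where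
  "act p (a, b, c, d) (u, v) =
     (map2 (\<lambda>x y. (a * x + b * y) mod int p) u v,
      map2 (\<lambda>x y. (c * x + d * y) mod int p) u v)"

definition orbit_rel :: "nat \<Rightarrow> nat \<Rightarrow> ((int list \<times> int list) \<times> (int list \<times> int list)) set" where
  "orbit_rel p n = {(x, y). x \<in> pairs p n \<and> y \<in> pairs p n \<and> (\<exists>g\<in>SL2Z. act p g x = y)}"

definition orbits :: "nat \<Rightarrow> nat \<Rightarrow> (int list \<times> int list) set set" where
  "orbits p n = pairs p n // orbit_rel p n"

end

theory Submission
  imports Defs "HOL-Number_Theory.Number_Theory"
begin

text \<open>
  Write each letter a < p^2 as a = u + p v with digits u, v < p. A word then becomes a
  2 \<times> n matrix over \<int>/p, and R1--R4 say that this matrix is in a normal form: its first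
  nonzero column is e1, the following columns lie on the line of e1, and the next one is
  a nonzero multiple of e2. Every orbit contains exactly one such matrix. Existence: SL(2,\<int>)
  acts transitively on nonzero vectors mod p, which moves the first nonzero column to e1,
  and a shear (1 b; 0 1) then clears the entry above the first nonzero entry of the second row.
  Uniqueness: an element of SL(2,\<int>) carrying one normal form to another preserves zero
  columns, so it fixes e1 and is a shear mod p; it then fixes the second row, and the
  entry it would add above the first nonzero entry of that row must vanish, so it acts
  trivially.
\<close>

lemma bij_betw_transversal_quotient:
  assumes "equiv A r" and "S \<subseteq> A"
    and meets: "\<And>x. x \<in> A \<Longrightarrow> \<exists>s\<in>S. (x, s) \<in> r"
    and unique: "\<And>s t. s \<in> S \<Longrightarrow> t \<in> S \<Longrightarrow> (s, t) \<in> r \<Longrightarrow> s = t"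
  shows "bij_betw (\<lambda>s. r `` {s}) S (A // r)"
proof (rule bij_betw_imageI)
  show "inj_on (\<lambda>s. r `` {s}) S"
    using assms(1,2) unique by (intro inj_onI) (auto dest: eq_equiv_class)
  show "(\<lambda>s. r `` {s}) ` S = A // r"
  proof
    show "(\<lambda>s. r `` {s}) ` S \<subseteq> A // r"
      using assms(2) by (auto intro: quotientI)
    show "A // r \<subseteq> (\<lambda>s. r `` {s}) ` S"
    proof
      fix X assume "X \<in> A // r"
      then obtain x where "x \<in> A" and X: "X = r `` {x}"
        by (auto elim: quotientE)
      then obtain s where "s \<in> S" and "(x, s) \<in> r"
        using meets by blast
      then show "X \<in> (\<lambda>s. r `` {s}) ` S"
        using X equiv_class_eq[OF assms(1)] by blast
    qed
  qed
qed

section \<open>The action of SL(2,\<int>) on pairs of rows\<close>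

lemma mem_pairs_iff:
  "(u, v) \<in> pairs p n \<longleftrightarrow> length u = n \<and> length v = n \<and>
     (\<forall>i<n. 0 \<le> u ! i \<and> u ! i < int p \<and> 0 \<le> v ! i \<and> v ! i < int p)"
  by (auto simp: pairs_def subset_iff set_conv_nth; blast)

lemma act_act:
  assumes "length u = length v"
  shows "act p (a, b, c, d) (act p (e, f, g, h) (u, v)) =
         act p (a * e + b * g, a * f + b * h, c * e + d * g, c * f + d * h) (u, v)"
proof -
  have mod_lin: "(s * (X mod m) + t * (Y mod m)) mod m = (s * X + t * Y) mod m" for s t X Y m :: int
    by (metis mod_add_cong mod_mult_right_eq)
  have "(s * ((e * x + f * y) mod m) + t * ((g * x + h * y) mod m)) mod m =
        ((s * e + t * g) * x + (s * f + t * h) * y) mod m" for s t x y m :: int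
    by (simp add: mod_lin algebra_simps)
  then show ?thesis
    using assms by (auto simp: list_eq_iff_nth_eq)
qed

lemma act_act_pairs:
  assumes "x \<in> pairs p n"
  shows "act p (a, b, c, d) (act p (e, f, g, h) x) =
         act p (a * e + b * g, a * f + b * h, c * e + d * g, c * f + d * h) x"
  using assms by (cases x) (simp only: act_act mem_pairs_iff)

lemma act_in_pairs: "x \<in> pairs p n \<Longrightarrow> 0 < p \<Longrightarrow> act p g x \<in> pairs p n"
  by (cases x; cases g) (auto simp: pairs_def set_zip)

lemma act_one:
  assumes "x \<in> pairs p n"
  shows "act p (1, 0, 0, 1) x = x"
  using assms by (cases x) (auto simp: mem_pairs_iff intro!: nth_equalityI)

lemma orbit_rel_act:
  assumes "x \<in> pairs p n" and "0 < p" and "a * d - b * c = 1"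
  shows "(x, act p (a, b, c, d) x) \<in> orbit_rel p n"
  using assms act_in_pairs unfolding orbit_rel_def SL2Z_def by blast

lemma orbit_rel_in_pairs: "(x, y) \<in> orbit_rel p n \<Longrightarrow> y \<in> pairs p n"
  by (simp add: orbit_rel_def)

lemma orbit_rel_refl: "x \<in> pairs p n \<Longrightarrow> 0 < p \<Longrightarrow> (x, x) \<in> orbit_rel p n"
  using orbit_rel_act[of x p n 1 1 0 0] act_one by simp

lemma equiv_orbit_rel:
  assumes "0 < p"
  shows "equiv (pairs p n) (orbit_rel p n)"
proof (rule equivI)
  show "refl_on (pairs p n) (orbit_rel p n)"
    using orbit_rel_refl[OF _ assms] by (intro refl_onI) (auto simp: orbit_rel_def)
  show "sym (orbit_rel p n)"
  proof (rule symI)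
    fix x y assume "(x, y) \<in> orbit_rel p n"
    then obtain a b c d where x: "x \<in> pairs p n" and det: "a * d - b * c = 1"
      and y: "y = act p (a, b, c, d) x"
      unfolding orbit_rel_def SL2Z_def by auto
    have "act p (d, - b, - c, a) y = act p (1, 0, 0, 1) x"
      using act_act_pairs[OF x] det unfolding y by (simp add: algebra_simps)
    then have "act p (d, - b, - c, a) y = x"
      using act_one[OF x] by simp
    then show "(y, x) \<in> orbit_rel p n"
      using orbit_rel_act[of y p n d a "- b" "- c"] act_in_pairs[OF x assms] assms det y
      by (simp add: algebra_simps)
  qed
  show "trans (orbit_rel p n)"
  proof (rule transI)
    fix x y z assume "(x, y) \<in> orbit_rel p n" "(y, z) \<in> orbit_rel p n"
    then obtain a b c d e f g h where x: "x \<in> pairs p n"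
      and det1: "a * d - b * c = 1" and det2: "e * h - f * g = 1"
      and y: "y = act p (a, b, c, d) x" and z: "z = act p (e, f, g, h) y"
      unfolding orbit_rel_def SL2Z_def by auto
    have "(e * a + f * c) * (g * b + h * d) - (e * b + f * d) * (g * a + h * c) =
          (a * d - b * c) * (e * h - f * g)"
      by (simp add: algebra_simps)
    then have "(e * a + f * c) * (g * b + h * d) - (e * b + f * d) * (g * a + h * c) = 1"
      using det1 det2 by simp
    from orbit_rel_act[OF x assms this] show "(x, z) \<in> orbit_rel p n"
      unfolding y z act_act_pairs[OF x] .
  qed
qed (auto simp: orbit_rel_def)

lemma orbit_rel_trans:
  "(x, y) \<in> orbit_rel p n \<Longrightarrow> (y, z) \<in> orbit_rel p n \<Longrightarrow> 0 < p \<Longrightarrow> (x, z) \<in> orbit_rel p n"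
  using equiv_orbit_rel by (meson equivE transD)

lemma act_nth:
  assumes "(u, v) \<in> pairs p n" and "act p (a, b, c, d) (u, v) = (u', v')" and "i < n"
  shows "u' ! i = (a * u ! i + b * v ! i) mod int p"
    and "v' ! i = (c * u ! i + d * v ! i) mod int p"
  using assms by (auto simp: mem_pairs_iff)

lemma act_length:
  assumes "(u, v) \<in> pairs p n" and "act p g (u, v) = (u', v')"
  shows "length u' = n" and "length v' = n"
  using assms by (cases g; auto simp: mem_pairs_iff)+

lemma pairs_entry_dvd_iff:
  assumes "(u, v) \<in> pairs p n" and "i < n"
  shows "int p dvd u ! i \<longleftrightarrow> u ! i = 0" and "int p dvd v ! i \<longleftrightarrow> v ! i = 0"
proof -
  have "int p dvd t \<longleftrightarrow> t = 0" if "0 \<le> t" "t < int p" for t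
    using that by (metis dvd_0_right le_less zdvd_not_zless)
  then show "int p dvd u ! i \<longleftrightarrow> u ! i = 0" "int p dvd v ! i \<longleftrightarrow> v ! i = 0"
    using assms by (simp_all add: mem_pairs_iff)
qed

section \<open>Moving a column to e1\<close>

lemma sl2_dvd_image_iff:
  fixes a b c d x y m :: int
  assumes "a * d - b * c = 1"
  shows "m dvd a * x + b * y \<and> m dvd c * x + d * y \<longleftrightarrow> m dvd x \<and> m dvd y"
proof
  assume images: "m dvd a * x + b * y \<and> m dvd c * x + d * y"
  have "d * (a * x + b * y) - b * (c * x + d * y) = (a * d - b * c) * x"
    and "a * (c * x + d * y) - c * (a * x + b * y) = (a * d - b * c) * y"
    by (simp_all add: algebra_simps)
  with images assms show "m dvd x \<and> m dvd y"
    using dvd_diff[OF dvd_mult dvd_mult] by (metis mult_1)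
qed auto

lemma sl2_maps_unit_column_to_e1:
  fixes x y m :: int
  assumes "coprime x m"
  shows "\<exists>a b c d. a * d - b * c = 1 \<and> [a * x + b * y = 1] (mod m) \<and> [c * x + d * y = 0] (mod m)"
proof -
  obtain z where z: "[x * z = 1] (mod m)"
    using cong_solve_coprime_int[OF assms] by blast
  \<comment> \<open>The matrix below is the product of three elementary matrices, which take (x, y)
    successively to (x, 1), (1, 1) and (1, 0) mod m.\<close>
  define c where "c = (1 - y) * z"
  define b where "b = 1 - x"
  have "[(1 - y) * (x * z) + y = (1 - y) * 1 + y] (mod m)"
    using z by (intro cong_add cong_mult) auto
  then have cx: "[c * x + y = 1] (mod m)"
    by (simp add: c_def algebra_simps)
  have "[x + b * (c * x + y) = x + b * 1] (mod m)"
    using cx by (intro cong_add cong_mult) auto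
  then have "[(1 + b * c) * x + b * y = 1] (mod m)"
    by (simp add: b_def algebra_simps)
  moreover have "[(c * x + y) - x - b * (c * x + y) = 1 - x - b * 1] (mod m)"
    using cx by (intro cong_diff cong_mult) auto
  then have "[(c - 1 - b * c) * x + (1 - b) * y = 0] (mod m)"
    by (simp add: b_def algebra_simps)
  moreover have "(1 + b * c) * (1 - b) - b * (c - 1 - b * c) = 1"
    by (simp add: algebra_simps)
  ultimately show ?thesis
    by blast
qed

lemma sl2_maps_nonzero_column_to_e1:
  fixes x y q :: int
  assumes "prime q" and "\<not> (q dvd x \<and> q dvd y)"
  shows "\<exists>a b c d. a * d - b * c = 1 \<and> [a * x + b * y = 1] (mod q) \<and> [c * x + d * y = 0] (mod q)"
proof (cases "q dvd x")
  case False
  then show ?thesis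
    using sl2_maps_unit_column_to_e1 prime_imp_coprime[OF assms(1)] coprime_commute by blast
next
  case True
  then have "coprime (x + y) q"
    using assms prime_imp_coprime coprime_commute dvd_add_right_iff by blast
  then obtain a b c d where "a * d - b * c = 1"
    and "[a * (x + y) + b * y = 1] (mod q)" "[c * (x + y) + d * y = 0] (mod q)"
    using sl2_maps_unit_column_to_e1 by blast
  moreover have "a * (c + d) - (a + b) * c = a * d - b * c"
    and "a * x + (a + b) * y = a * (x + y) + b * y" "c * x + (c + d) * y = c * (x + y) + d * y"
    by (simp_all add: algebra_simps)
  ultimately show ?thesis
    by (intro exI[of _ a] exI[of _ "a + b"] exI[of _ c] exI[of _ "c + d"]) simp
qed

section \<open>Normal forms of orbits\<close>

text \<open>The digit rows of a word of W: J and K are the paper's j - 1 and k - 1.\<close>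

definition canonical_at :: "nat \<Rightarrow> nat \<Rightarrow> nat \<Rightarrow> int list \<Rightarrow> int list \<Rightarrow> bool" where
  "canonical_at n J K u v \<longleftrightarrow> J < K \<and> K \<le> n \<and> (\<forall>i<J. u ! i = 0 \<and> v ! i = 0) \<and>
     u ! J = 1 \<and> v ! J = 0 \<and> (\<forall>i. J < i \<and> i < K \<longrightarrow> v ! i = 0) \<and>
     (K < n \<longrightarrow> u ! K = 0 \<and> v ! K \<noteq> 0)"

fun canonical :: "nat \<Rightarrow> int list \<times> int list \<Rightarrow> bool" where
  "canonical n (u, v) \<longleftrightarrow> (\<forall>i<n. u ! i = 0 \<and> v ! i = 0) \<or> (\<exists>J K. canonical_at n J K u v)"

lemma orbit_rel_normalize_column:
  assumes "prime p" and x: "(u, v) \<in> pairs p n" and "J < n" and "\<not> (u ! J = 0 \<and> v ! J = 0)"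
  obtains u' v' where "((u, v), (u', v')) \<in> orbit_rel p n" and "u' ! J = 1" and "v' ! J = 0"
    and "\<And>i. i < n \<Longrightarrow> u ! i = 0 \<Longrightarrow> v ! i = 0 \<Longrightarrow> u' ! i = 0 \<and> v' ! i = 0"
proof -
  have "prime (int p)"
    using assms(1) by simp
  moreover have "\<not> (int p dvd u ! J \<and> int p dvd v ! J)"
    using pairs_entry_dvd_iff[OF x \<open>J < n\<close>] assms(4) by simp
  ultimately obtain a b c d where det: "a * d - b * c = 1"
    and "[a * u ! J + b * v ! J = 1] (mod int p)" "[c * u ! J + d * v ! J = 0] (mod int p)"
    using sl2_maps_nonzero_column_to_e1 by blast
  then have "(a * u ! J + b * v ! J) mod int p = 1" "(c * u ! J + d * v ! J) mod int p = 0"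
    using prime_gt_1_nat[OF assms(1)] by (simp_all add: cong_def)
  moreover obtain u' v' where act: "act p (a, b, c, d) (u, v) = (u', v')"
    by fastforce
  ultimately have "u' ! J = 1" "v' ! J = 0"
    using act_nth[OF x act \<open>J < n\<close>] by simp_all
  moreover have "u' ! i = 0 \<and> v' ! i = 0" if "i < n" "u ! i = 0" "v ! i = 0" for i
    using act_nth[OF x act \<open>i < n\<close>] that by simp
  moreover have "((u, v), (u', v')) \<in> orbit_rel p n"
    using orbit_rel_act[OF x prime_gt_0_nat[OF assms(1)] det] unfolding act .
  ultimately show thesis
    using that by blast
qed

lemma orbit_rel_shear:
  assumes "prime p" and x: "(u, v) \<in> pairs p n" and "K < n" and "v ! K \<noteq> 0"
  obtains u' where "((u, v), (u', v)) \<in> orbit_rel p n" and "u' ! K = 0"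
    and "\<And>i. i < n \<Longrightarrow> v ! i = 0 \<Longrightarrow> u' ! i = u ! i"
proof -
  have "coprime (v ! K) (int p)"
    using pairs_entry_dvd_iff[OF x \<open>K < n\<close>] assms(1,4)
    by (metis coprime_commute prime_imp_coprime prime_nat_int_transfer)
  then obtain z where z: "[v ! K * z = 1] (mod int p)"
    using cong_solve_coprime_int by blast
  define \<beta> where "\<beta> = - (u ! K) * z"
  obtain u' v' where act: "act p (1, \<beta>, 0, 1) (u, v) = (u', v')"
    by fastforce
  have "u ! K + \<beta> * v ! K = u ! K - u ! K * (v ! K * z)"
    by (simp add: \<beta>_def algebra_simps)
  moreover have "[u ! K - u ! K * (v ! K * z) = u ! K - u ! K * 1] (mod int p)"
    using z by (intro cong_diff cong_mult) auto
  ultimately have "[u ! K + \<beta> * v ! K = 0] (mod int p)"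
    by simp
  then have "u' ! K = 0"
    using act_nth(1)[OF x act \<open>K < n\<close>] by (simp add: cong_def)
  moreover have "v' = v"
    using act_nth(2)[OF x act] act_length[OF x act] x by (auto simp: mem_pairs_iff intro: nth_equalityI)
  moreover have "u' ! i = u ! i" if "i < n" "v ! i = 0" for i
    using act_nth(1)[OF x act \<open>i < n\<close>] x that by (simp add: mem_pairs_iff)
  moreover have "((u, v), (u', v')) \<in> orbit_rel p n"
    using orbit_rel_act[OF x prime_gt_0_nat[OF assms(1)], of 1 1 \<beta> 0] unfolding act by simp
  ultimately show thesis
    using that by blast
qed

lemma canonical_exists_from_e1_column:
  assumes "prime p" and x: "(u, v) \<in> pairs p n" and "J < n"
    and "\<forall>i<J. u ! i = 0 \<and> v ! i = 0" and "u ! J = 1" and "v ! J = 0"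
  shows "\<exists>y. ((u, v), y) \<in> orbit_rel p n \<and> canonical n y"
proof (cases "\<forall>i. J < i \<and> i < n \<longrightarrow> v ! i = 0")
  case True
  then have "canonical_at n J n u v"
    using assms by (simp add: canonical_at_def)
  then show ?thesis
    using orbit_rel_refl[OF x prime_gt_0_nat[OF assms(1)]] by auto
next
  case False
  define K where "K = (LEAST i. J < i \<and> i < n \<and> v ! i \<noteq> 0)"
  have K: "J < K" "K < n" "v ! K \<noteq> 0"
    using False LeastI_ex[of "\<lambda>i. J < i \<and> i < n \<and> v ! i \<noteq> 0"] unfolding K_def by auto
  have between: "v ! i = 0" if "J < i" "i < K" for i
    using not_less_Least[of i "\<lambda>i. J < i \<and> i < n \<and> v ! i \<noteq> 0"] that K unfolding K_def by auto
  obtain u' where rel: "((u, v), (u', v)) \<in> orbit_rel p n" and "u' ! K = 0"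
    and same: "\<And>i. i < n \<Longrightarrow> v ! i = 0 \<Longrightarrow> u' ! i = u ! i"
    using orbit_rel_shear[OF assms(1) x K(2,3)] by blast
  have "canonical_at n J K u' v"
    unfolding canonical_at_def using assms K between same \<open>u' ! K = 0\<close> by auto
  then show ?thesis
    using rel by auto
qed

lemma canonical_exists:
  assumes "prime p" and x: "x \<in> pairs p n"
  shows "\<exists>y. (x, y) \<in> orbit_rel p n \<and> canonical n y"
proof -
  have p: "0 < p"
    using assms(1) prime_gt_0_nat by blast
  obtain u v where uv: "x = (u, v)"
    by fastforce
  show ?thesis
  proof (cases "\<forall>i<n. u ! i = 0 \<and> v ! i = 0")
    case True
    then show ?thesis
      using orbit_rel_refl[OF x p] uv by auto
  next
    case False
    define J where "J = (LEAST i. i < n \<and> \<not> (u ! i = 0 \<and> v ! i = 0))"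
    have J: "J < n" "\<not> (u ! J = 0 \<and> v ! J = 0)"
      using False LeastI_ex[of "\<lambda>i. i < n \<and> \<not> (u ! i = 0 \<and> v ! i = 0)"] unfolding J_def by auto
    have before: "u ! i = 0 \<and> v ! i = 0" if "i < J" for i
      using not_less_Least[of i "\<lambda>i. i < n \<and> \<not> (u ! i = 0 \<and> v ! i = 0)"] that J
      unfolding J_def by auto
    obtain u' v' where rel: "((u, v), (u', v')) \<in> orbit_rel p n"
      and e1: "u' ! J = 1" "v' ! J = 0"
      and zero: "\<And>i. i < n \<Longrightarrow> u ! i = 0 \<Longrightarrow> v ! i = 0 \<Longrightarrow> u' ! i = 0 \<and> v' ! i = 0"
      using orbit_rel_normalize_column[OF assms(1) x[unfolded uv] J] by blast
    have "(u', v') \<in> pairs p n"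
      using orbit_rel_in_pairs[OF rel] .
    moreover have "\<forall>i<J. u' ! i = 0 \<and> v' ! i = 0"
      using before zero J(1) by simp
    ultimately obtain y where "((u', v'), y) \<in> orbit_rel p n" "canonical n y"
      using canonical_exists_from_e1_column[OF assms(1) _ J(1) _ e1] by blast
    then show ?thesis
      using orbit_rel_trans[OF rel _ p] uv by blast
  qed
qed

lemma canonical_at_first_index_unique:
  assumes "canonical_at n J K u v" and "canonical_at n J' K' u' v'"
    and same_zeros: "\<And>i. i < n \<Longrightarrow> (u ! i = 0 \<and> v ! i = 0) \<longleftrightarrow> (u' ! i = 0 \<and> v' ! i = 0)"
  shows "J' = J"
proof (rule ccontr)
  assume "J' \<noteq> J"
  then consider "J' < J" | "J < J'"
    by linarith
  then show False
  proof cases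
    case 1
    then show False
      using assms(1,2) same_zeros[of J'] unfolding canonical_at_def by auto
  next
    case 2
    then show False
      using assms(1,2) same_zeros[of J] unfolding canonical_at_def by auto
  qed
qed

lemma canonical_at_second_index_unique:
  assumes "canonical_at n J K u v" and "canonical_at n J K' u' v"
  shows "K' = K"
proof (rule ccontr)
  assume "K' \<noteq> K"
  then consider "K' < K" | "K < K'"
    by linarith
  then show False
  proof cases
    case 1
    then show False
      using assms unfolding canonical_at_def by auto
  next
    case 2
    then show False
      using assms unfolding canonical_at_def by auto
  qed
qed

lemma canonical_at_second_row_zero:
  assumes "canonical_at n J n u v" and "i < n"
  shows "v ! i = 0"
proof -
  consider "i < J" | "i = J" | "J < i"
    by linarith
  then show ?thesis
    using assms unfolding canonical_at_def by cases auto
qed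

lemma act_zero_column_iff:
  assumes x: "(u, v) \<in> pairs p n" and act: "act p (a, b, c, d) (u, v) = (u', v')"
    and det: "a * d - b * c = 1" and "i < n"
  shows "(u' ! i = 0 \<and> v' ! i = 0) \<longleftrightarrow> (u ! i = 0 \<and> v ! i = 0)"
proof -
  have "(u' ! i = 0 \<and> v' ! i = 0) \<longleftrightarrow>
        int p dvd a * u ! i + b * v ! i \<and> int p dvd c * u ! i + d * v ! i"
    using act_nth[OF x act \<open>i < n\<close>] by (simp add: dvd_eq_mod_eq_0)
  also have "\<dots> \<longleftrightarrow> int p dvd u ! i \<and> int p dvd v ! i"
    using sl2_dvd_image_iff[OF det] .
  also have "\<dots> \<longleftrightarrow> u ! i = 0 \<and> v ! i = 0"
    using pairs_entry_dvd_iff[OF x \<open>i < n\<close>] by simp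
  finally show ?thesis .
qed

lemma act_unipotent:
  assumes x: "(u, v) \<in> pairs p n" and act: "act p (a, b, c, d) (u, v) = (u', v')"
    and "[a = 1] (mod int p)" "[c = 0] (mod int p)" "[d = 1] (mod int p)"
  shows "v' = v" and "\<And>i. i < n \<Longrightarrow> u' ! i = (u ! i + b * v ! i) mod int p"
proof -
  have "[a * s + b * t = 1 * s + b * t] (mod int p)" "[c * s + d * t = 0 * s + 1 * t] (mod int p)"
    for s t :: int
    using assms(3-5) by (auto intro!: cong_add cong_mult simp del: mult_1 mult_zero_left)
  then have row1: "(a * s + b * t) mod int p = (s + b * t) mod int p"
    and row2: "(c * s + d * t) mod int p = t mod int p" for s t :: int
    unfolding cong_def by simp_all
  show "u' ! i = (u ! i + b * v ! i) mod int p" if "i < n" for i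
    using act_nth(1)[OF x act that] row1 by simp
  show "v' = v"
    using act_nth(2)[OF x act] act_length[OF x act] x row2
    by (auto simp: mem_pairs_iff intro: nth_equalityI)
qed

lemma canonical_at_act_fixes_e1:
  assumes "1 < p" and x: "(u, v) \<in> pairs p n" and act: "act p (a, b, c, d) (u, v) = (u', v')"
    and det: "a * d - b * c = 1"
    and can: "canonical_at n J K u v" and can': "canonical_at n J K' u' v'"
  shows "[a = 1] (mod int p)" and "[c = 0] (mod int p)" and "[d = 1] (mod int p)"
proof -
  have "J < n"
    using can unfolding canonical_at_def by simp
  then have "a mod int p = 1" "c mod int p = 0"
    using act_nth[OF x act] can can' unfolding canonical_at_def by auto
  then show a: "[a = 1] (mod int p)" and c: "[c = 0] (mod int p)"
    using assms(1) by (simp_all add: cong_def)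
  have "[a * d - b * c = 1 * d - b * 0] (mod int p)"
    using a c by (intro cong_diff cong_mult cong_refl)
  then show "[d = 1] (mod int p)"
    using det by (simp add: cong_sym_eq)
qed

lemma canonical_at_act_eq:
  assumes "prime p" and x: "(u, v) \<in> pairs p n" and act: "act p (a, b, c, d) (u, v) = (u', v')"
    and det: "a * d - b * c = 1"
    and can: "canonical_at n J K u v" and can': "canonical_at n J K' u' v'"
  shows "u' = u" and "v' = v"
proof -
  note unipotent = act_unipotent[OF x act
      canonical_at_act_fixes_e1[OF prime_gt_1_nat[OF assms(1)] x act det can can']]
  show v: "v' = v"
    using unipotent(1) .
  have "K' = K"
    using canonical_at_second_index_unique[OF can can'[unfolded v]] .
  have "int p dvd b \<or> (\<forall>i<n. v ! i = 0)"
  proof (cases "K < n")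
    case True
    have "int p dvd b * v ! K"
      using unipotent(2)[OF True] can can' \<open>K' = K\<close> True
      unfolding canonical_at_def by (simp add: dvd_eq_mod_eq_0)
    moreover have "\<not> int p dvd v ! K"
      using pairs_entry_dvd_iff(2)[OF x True] can True unfolding canonical_at_def by simp
    ultimately show ?thesis
      using assms(1) prime_dvd_multD[of "int p"] by auto
  next
    case False
    then have "K = n"
      using can unfolding canonical_at_def by simp
    then show ?thesis
      using canonical_at_second_row_zero[OF can[unfolded \<open>K = n\<close>]] by blast
  qed
  then have "int p dvd b * v ! i" if "i < n" for i
    using that by auto
  then have "u' ! i = u ! i" if "i < n" for i
    using unipotent(2)[OF that] x that
    by (simp add: mem_pairs_iff mod_add_right_eq[symmetric] dvd_eq_mod_eq_0)
  then show "u' = u"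
    using act_length[OF x act] x by (auto simp: mem_pairs_iff intro: nth_equalityI)
qed

lemma canonical_unique:
  assumes "prime p" and "(x, y) \<in> orbit_rel p n" and "canonical n x" and "canonical n y"
  shows "x = y"
proof -
  obtain a b c d where "x \<in> pairs p n" and det: "a * d - b * c = 1"
    and "y = act p (a, b, c, d) x"
    using assms(2) unfolding orbit_rel_def SL2Z_def by auto
  moreover obtain u v u' v' where x: "x = (u, v)" and act: "act p (a, b, c, d) (u, v) = (u', v')"
    by (metis surj_pair)
  ultimately have pairs: "(u, v) \<in> pairs p n" and y: "y = (u', v')"
    by simp_all
  note same_zeros = act_zero_column_iff[OF pairs act det]
  consider "\<forall>i<n. u ! i = 0 \<and> v ! i = 0" | J K where "canonical_at n J K u v"
    using assms(3) x by auto
  then show ?thesis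
  proof cases
    case 1
    then have "\<forall>i<n. u' ! i = 0 \<and> v' ! i = 0"
      using same_zeros by blast
    with 1 show ?thesis
      using x y pairs act_length[OF pairs act]
      by (auto simp: mem_pairs_iff intro: nth_equalityI)
  next
    case 2
    then have "J < n" "\<not> (u ! J = 0 \<and> v ! J = 0)"
      unfolding canonical_at_def by auto
    then have "\<not> (\<forall>i<n. u' ! i = 0 \<and> v' ! i = 0)"
      using same_zeros by blast
    then obtain J' K' where can': "canonical_at n J' K' u' v'"
      using assms(4) y by auto
    moreover have "J' = J"
      using canonical_at_first_index_unique[OF 2 can' same_zeros[symmetric]] .
    ultimately show ?thesis
      using canonical_at_act_eq[OF assms(1) pairs act det 2] x y by simp
  qed
qed

section \<open>Words as digit rows\<close>

lemma all_shift_pred_iff: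
  "(\<forall>i. a < i \<and> i < Suc b \<longrightarrow> P (i - 1)) \<longleftrightarrow> (\<forall>i. a \<le> i \<and> i < b \<longrightarrow> P i)"
proof
  assume shifted: "\<forall>i. a < i \<and> i < Suc b \<longrightarrow> P (i - 1)"
  show "\<forall>i. a \<le> i \<and> i < b \<longrightarrow> P i"
    using shifted[rule_format, of "Suc _"] by simp
next
  assume unshifted: "\<forall>i. a \<le> i \<and> i < b \<longrightarrow> P i"
  show "\<forall>i. a < i \<and> i < Suc b \<longrightarrow> P (i - 1)"
  proof (intro allI impI)
    fix i assume "a < i \<and> i < Suc b"
    then have "a \<le> i - 1 \<and> i - 1 < b"
      by auto
    with unshifted show "P (i - 1)"
      by blast
  qed
qed

lemma ex_shift_Suc_iff:
  "(\<exists>j k. 1 \<le> j \<and> j < k \<and> k \<le> n + 1 \<and> \<Phi> j k) \<longleftrightarrow>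
   (\<exists>J K. J < K \<and> K \<le> n \<and> \<Phi> (Suc J) (Suc K))"
proof
  assume "\<exists>j k. 1 \<le> j \<and> j < k \<and> k \<le> n + 1 \<and> \<Phi> j k"
  then obtain j k where "1 \<le> j" "j < k" "k \<le> n + 1" "\<Phi> j k"
    by blast
  then show "\<exists>J K. J < K \<and> K \<le> n \<and> \<Phi> (Suc J) (Suc K)"
    by (intro exI[of _ "j - 1"] exI[of _ "k - 1"]) auto
qed force

lemma mem_W_iff:
  "w \<in> W p n \<longleftrightarrow> length w = n \<and> (\<forall>i<n. w ! i < p\<^sup>2) \<and>
     (w = replicate n 0 \<or>
      (\<exists>J K. J < K \<and> K \<le> n \<and> (\<forall>i<J. w ! i = 0) \<and> w ! J = 1 \<and>
        (\<forall>i. J < i \<and> i < K \<longrightarrow> w ! i < p) \<and>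
        (K < n \<longrightarrow> w ! K \<in> {p * t | t. 1 \<le> t \<and> t \<le> p - 1})))"
proof (cases "length w = n \<and> (\<forall>i<n. w ! i < p\<^sup>2)")
  case True
  then have tail: "\<forall>i. Suc K < i \<and> i \<le> n \<longrightarrow> w ! (i - 1) \<in> {0..<p\<^sup>2}" for K
    by auto
  have head: "(\<forall>i. 1 \<le> i \<and> i < Suc J \<longrightarrow> w ! (i - 1) = 0) \<longleftrightarrow> (\<forall>i<J. w ! i = 0)" for J
    using all_shift_pred_iff[of 0 J "\<lambda>i. w ! i = 0"] by (simp add: Suc_le_eq)
  have middle: "(\<forall>i. Suc J < i \<and> i < Suc K \<longrightarrow> w ! (i - 1) \<in> {0..<p}) \<longleftrightarrow>
                 (\<forall>i. J < i \<and> i < K \<longrightarrow> w ! i < p)" for J K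
    using all_shift_pred_iff[of "Suc J" K "\<lambda>i. w ! i \<in> {0..<p}"] by (simp add: Suc_le_eq)
  show ?thesis
    using True unfolding W_def mem_Collect_eq ex_shift_Suc_iff
    by (simp only: tail[THEN eqTrueI] head middle diff_Suc_1 Suc_le_eq Suc_less_eq simp_thms)
qed (auto simp: W_def)

definition digits :: "nat \<Rightarrow> nat list \<Rightarrow> int list \<times> int list" where
  "digits p w = (map (\<lambda>a. int (a mod p)) w, map (\<lambda>a. int (a div p)) w)"

definition undigits :: "nat \<Rightarrow> int list \<times> int list \<Rightarrow> nat list" where
  "undigits p x = map2 (\<lambda>s t. nat s + p * nat t) (fst x) (snd x)"

lemma bij_betw_digits:
  assumes "0 < p"
  shows "bij_betw (digits p) {w \<in> lists {..<p\<^sup>2}. length w = n} (pairs p n)"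
proof (rule bij_betw_byWitness[where f' = "undigits p"])
  show "\<forall>w\<in>{w \<in> lists {..<p\<^sup>2}. length w = n}. undigits p (digits p w) = w"
    by (auto simp: digits_def undigits_def intro!: nth_equalityI)
  have digit: "nat s mod p = nat s" "nat s div p = 0" if "0 \<le> s" "s < int p" for s
    using that by (simp_all add: nat_less_iff)
  show "\<forall>x\<in>pairs p n. digits p (undigits p x) = x"
    using assms by (auto simp: digits_def undigits_def mem_pairs_iff digit intro!: nth_equalityI)
  show "digits p ` {w \<in> lists {..<p\<^sup>2}. length w = n} \<subseteq> pairs p n"
    using assms by (auto simp: digits_def pairs_def less_mult_imp_div_less power2_eq_square)
  have "nat s + p * nat t < p\<^sup>2" if "0 \<le> s" "s < int p" "0 \<le> t" "t < int p" for s t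
  proof -
    have "nat s + p * nat t < p + p * nat t"
      using that by linarith
    also have "\<dots> \<le> p * p"
      using that mult_le_mono2[of "Suc (nat t)" p p] by simp
    finally show ?thesis
      by (simp add: power2_eq_square)
  qed
  then show "undigits p ` pairs p n \<subseteq> {w \<in> lists {..<p\<^sup>2}. length w = n}"
    by (auto simp: undigits_def mem_pairs_iff set_zip)
qed

lemma letter_digits:
  fixes a p :: nat
  assumes "1 < p" and "a < p\<^sup>2"
  shows "a = 0 \<longleftrightarrow> a mod p = 0 \<and> a div p = 0"
    and "a = 1 \<longleftrightarrow> a mod p = 1 \<and> a div p = 0"
    and "a < p \<longleftrightarrow> a div p = 0"
    and "a \<in> {p * t | t. 1 \<le> t \<and> t \<le> p - 1} \<longleftrightarrow> a mod p = 0 \<and> a div p \<noteq> 0"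
proof -
  have a: "a = a mod p + p * (a div p)"
    by simp
  have "a div p < p"
    using assms by (simp add: less_mult_imp_div_less power2_eq_square)
  show "a = 0 \<longleftrightarrow> a mod p = 0 \<and> a div p = 0"
    using a by (metis add.left_neutral div_0 mod_0 mult_0_right)
  show "a = 1 \<longleftrightarrow> a mod p = 1 \<and> a div p = 0"
    using a assms(1) by (metis add.right_neutral div_less mod_less mult_0_right)
  show "a < p \<longleftrightarrow> a div p = 0"
    using assms(1) by (auto simp: div_eq_0_iff)
  show "a \<in> {p * t | t. 1 \<le> t \<and> t \<le> p - 1} \<longleftrightarrow> a mod p = 0 \<and> a div p \<noteq> 0"
    using a \<open>a div p < p\<close> by (auto intro!: exI[of _ "a div p"])
qed

lemma mem_W_iff_canonical:
  assumes "1 < p" and "w \<in> lists {..<p\<^sup>2}" and "length w = n"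
  shows "w \<in> W p n \<longleftrightarrow> canonical n (digits p w)"
proof -
  define u where "u = map (\<lambda>a. int (a mod p)) w"
  define v where "v = map (\<lambda>a. int (a div p)) w"
  have letters: "w ! i < p\<^sup>2" if "i < n" for i
    using assms that by (auto simp: in_lists_conv_set)
  have zero: "u ! i = 0 \<and> v ! i = 0 \<longleftrightarrow> w ! i = 0"
    and one: "u ! i = 1 \<and> v ! i = 0 \<longleftrightarrow> w ! i = 1"
    and small: "v ! i = 0 \<longleftrightarrow> w ! i < p"
    and multiple: "u ! i = 0 \<and> v ! i \<noteq> 0 \<longleftrightarrow> w ! i \<in> {p * t | t. 1 \<le> t \<and> t \<le> p - 1}"
    if "i < n" for i
    using letter_digits[OF assms(1) letters[OF that]] that assms(3)
    by (simp_all add: u_def v_def)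
  have at: "(J < K \<and> K \<le> n \<and> (\<forall>i<J. w ! i = 0) \<and> w ! J = 1 \<and>
             (\<forall>i. J < i \<and> i < K \<longrightarrow> w ! i < p) \<and>
             (K < n \<longrightarrow> w ! K \<in> {p * t | t. 1 \<le> t \<and> t \<le> p - 1}))
            \<longleftrightarrow> canonical_at n J K u v" for J K
  proof (cases "J < K \<and> K \<le> n")
    case True
    then have "(\<forall>i<J. w ! i = 0) \<longleftrightarrow> (\<forall>i<J. u ! i = 0 \<and> v ! i = 0)"
      and "w ! J = 1 \<longleftrightarrow> u ! J = 1 \<and> v ! J = 0"
      and "(\<forall>i. J < i \<and> i < K \<longrightarrow> w ! i < p) \<longleftrightarrow> (\<forall>i. J < i \<and> i < K \<longrightarrow> v ! i = 0)"
      and "(K < n \<longrightarrow> w ! K \<in> {p * t | t. 1 \<le> t \<and> t \<le> p - 1}) \<longleftrightarrow>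
           (K < n \<longrightarrow> u ! K = 0 \<and> v ! K \<noteq> 0)"
      using zero one small multiple by auto
    with True show ?thesis
      unfolding canonical_at_def by simp
  qed (auto simp: canonical_at_def)
  have "w = replicate n 0 \<longleftrightarrow> (\<forall>i<n. u ! i = 0 \<and> v ! i = 0)"
    using zero assms(3) by (auto simp: list_eq_iff_nth_eq)
  then show ?thesis
    using assms(3) letters unfolding mem_W_iff canonical.simps digits_def u_def[symmetric] v_def[symmetric] at
    by blast
qed

lemma bij_betw_digits_W:
  assumes "1 < p"
  shows "bij_betw (digits p) (W p n) {x \<in> pairs p n. canonical n x}"
proof -
  have "length w = n" and "\<forall>i<n. w ! i < p\<^sup>2" if "w \<in> W p n" for w
    using that by (simp_all add: W_def)
  then have W: "{w \<in> {w \<in> lists {..<p\<^sup>2}. length w = n}. w \<in> W p n} = W p n"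
    by (auto simp: in_lists_conv_set in_set_conv_nth)
  have "bij_betw (digits p) {w \<in> {w \<in> lists {..<p\<^sup>2}. length w = n}. w \<in> W p n}
          {x \<in> pairs p n. canonical n x}"
  proof (rule bij_betw_Collect[OF bij_betw_digits])
    show "0 < p"
      using assms by simp
    show "canonical n (digits p w) \<longleftrightarrow> w \<in> W p n"
      if "w \<in> {w \<in> lists {..<p\<^sup>2}. length w = n}" for w
      using mem_W_iff_canonical[OF assms] that by simp
  qed
  then show ?thesis
    unfolding W .
qed

lemma bij_betw_canonical_orbits:
  assumes "prime p"
  shows "bij_betw (\<lambda>x. orbit_rel p n `` {x}) {x \<in> pairs p n. canonical n x} (orbits p n)"
  unfolding orbits_def
proof (rule bij_betw_transversal_quotient[OF equiv_orbit_rel])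
  show "0 < p"
    using assms prime_gt_0_nat by blast
  show "\<exists>y\<in>{x \<in> pairs p n. canonical n x}. (x, y) \<in> orbit_rel p n" if x: "x \<in> pairs p n" for x
  proof -
    obtain y where "(x, y) \<in> orbit_rel p n" and "canonical n y"
      using canonical_exists[OF assms x] by blast
    then show ?thesis
      using orbit_rel_in_pairs by blast
  qed
  show "x = y" if "x \<in> {x \<in> pairs p n. canonical n x}" "y \<in> {x \<in> pairs p n. canonical n x}"
    and "(x, y) \<in> orbit_rel p n" for x y
    using canonical_unique[OF assms that(3)] that(1,2) by simp
qed blast

theorem theorem3p1:
  fixes p n :: nat
  assumes "prime p" and "n \<ge> 1"
  shows "\<exists>f. bij_betw f (W p n) (orbits p n)"
proof -
  have "bij_betw (digits p) (W p n) {x \<in> pairs p n. canonical n x}"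
    using bij_betw_digits_W prime_gt_1_nat[OF assms(1)] by blast
  moreover have "bij_betw (\<lambda>x. orbit_rel p n `` {x}) {x \<in> pairs p n. canonical n x} (orbits p n)"
    using bij_betw_canonical_orbits[OF assms(1)] .
  ultimately show ?thesis
    using bij_betw_trans by blast
qed

end
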